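(* Consider a finite quiver with nodes $i=1,\dots,n$, each carrying an integer $N_i\ge 2$ and a non-negative integer $F_i$ (number of fundamental hypermultiplets), and with a finite multiset $E$ of edges, each edge $e$ joining two distinct nodes $s(e)\neq t(e)$ (bifundamental hypermultiplets; no loops/adjoints). For $\mathbf m=(m_{ia})_{1\le i\le n,\,1\le a\le N_i}\in\mathbb Z^{\sum_i N_i}$ define $$\Delta(\mathbf m)=\frac12\sum_{i=1}^n F_i\sum_{a=1}^{N_i}|m_{ia}|+\frac12\sum_{e\in E}\sum_{a=1}^{N_{s(e)}}\sum_{b=1}^{N_{t(e)}}|m_{s(e)a}-m_{t(e)b}|-\sum_{i=1}^n\sum_{1\le a<b\le N_i}|m_{ia}-m_{ib}|.$$ Assume that $\Delta(\mathbf m)\ge 1$ for every nonzero $\mathbf m$. Then every $\mathbf m$ with $\Delta(\mathbf m)=1$ has either all components $m_{ia}\ge 0$ or all components $m_{ia}\le 0$; moreover, for such $\mathbf m$ the traces $\sum_{a=1}^{N_i} m_{ia}$, $i=1,\dots,n$, are not all zero.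
   Context: This $\Delta(\mathbf m)$ is the monopole dimension of a 3d $\mathcal N=4$ gauge theory with gauge group $\prod_i U(N_i)$, fundamental and bifundamental hypermultiplets; the hypothesis $\Delta(\mathbf m)\ge 1$ for all $\mathbf m\neq 0$ is the paper's notion of a "good" theory. *)

theory Defs
  imports Main "HOL-Library.Multiset" Complex_Main
begin

text \<open>Quiver with nodes 0..n-1 (the paper's 1..n), ranks N i, flavours F i,
  edges a multiset of pairs (s e, t e). A magnetic charge is m :: nat => nat => int,
  only the entries m i a with i < n, a < N i are relevant.\<close>

definition monopole_dim ::
  "nat \<Rightarrow> (nat \<Rightarrow> nat) \<Rightarrow> (nat \<Rightarrow> nat) \<Rightarrow> (nat \<times> nat) multiset \<Rightarrow> (nat \<Rightarrow> nat \<Rightarrow> int) \<Rightarrow> real"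
where
  "monopole_dim n N F E m =
     (1/2) * (\<Sum>i<n. real (F i) * (\<Sum>a<N i. real_of_int \<bar>m i a\<bar>))
   + (1/2) * (\<Sum>\<^sub># (image_mset (\<lambda>e. \<Sum>a<N (fst e). \<Sum>b<N (snd e).
                 real_of_int \<bar>m (fst e) a - m (snd e) b\<bar>) E))
   - (\<Sum>i<n. \<Sum>b<N i. \<Sum>a<b. real_of_int \<bar>m i a - m i b\<bar>)"

definition charge_nonzero :: "nat \<Rightarrow> (nat \<Rightarrow> nat) \<Rightarrow> (nat \<Rightarrow> nat \<Rightarrow> int) \<Rightarrow> bool" where
  "charge_nonzero n N m \<longleftrightarrow> (\<exists>i<n. \<exists>a<N i. m i a \<noteq> 0)"

end

theory Submission
  imports Defs
begin

text \<open>Every term of \<open>\<Delta>\<close> is built from \<open>\<bar>x - y\<bar>\<close> with \<open>y = 0\<close> allowed, and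
  \<open>\<bar>x - y\<bar> = \<bar>x\<^sup>+ - y\<^sup>+\<bar> + \<bar>x\<^sup>- - y\<^sup>-\<bar>\<close>, so \<open>\<Delta>\<close> is additive on the splitting
  \<open>m = m\<^sup>+ + m\<^sup>-\<close> into positive and negative parts. If \<open>\<Delta>(m) = 1\<close> and \<open>m\<close> had entries of
  both signs, both parts would be nonzero charges and \<open>\<Delta>(m) \<ge> 1 + 1\<close>. Since \<open>\<Delta>(0) = 0\<close>,
  \<open>m \<noteq> 0\<close>; a nonzero sign-definite charge has a nonzero trace at some node.\<close>

lemma abs_diff_eq_pos_part_plus_neg_part:
  "\<bar>(x::int) - y\<bar> = \<bar>max x 0 - max y 0\<bar> + \<bar>min x 0 - min y 0\<bar>"
  by (simp add: max_def min_def abs_if)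

lemma monopole_dim_pos_neg_split:
  "monopole_dim n N F E m =
     monopole_dim n N F E (\<lambda>i a. max (m i a) 0) + monopole_dim n N F E (\<lambda>i a. min (m i a) 0)"
proof -
  have abs_split: "\<bar>m i a\<bar> = \<bar>max (m i a) 0\<bar> + \<bar>min (m i a) 0\<bar>" for i a
    using abs_diff_eq_pos_part_plus_neg_part[of "m i a" 0] by simp
  have flavours: "(\<Sum>i<n. real (F i) * (\<Sum>a<N i. real_of_int \<bar>m i a\<bar>)) =
      (\<Sum>i<n. real (F i) * (\<Sum>a<N i. real_of_int \<bar>max (m i a) 0\<bar>))
    + (\<Sum>i<n. real (F i) * (\<Sum>a<N i. real_of_int \<bar>min (m i a) 0\<bar>))"
    by (subst abs_split) (simp only: of_int_add sum.distrib distrib_left)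
  have vectors: "(\<Sum>i<n. \<Sum>b<N i. \<Sum>a<b. real_of_int \<bar>m i a - m i b\<bar>) =
      (\<Sum>i<n. \<Sum>b<N i. \<Sum>a<b. real_of_int \<bar>max (m i a) 0 - max (m i b) 0\<bar>)
    + (\<Sum>i<n. \<Sum>b<N i. \<Sum>a<b. real_of_int \<bar>min (m i a) 0 - min (m i b) 0\<bar>)"
    by (subst abs_diff_eq_pos_part_plus_neg_part) (simp only: of_int_add sum.distrib)
  have bifundamentals:
    "(\<lambda>e. \<Sum>a<N (fst e). \<Sum>b<N (snd e). real_of_int \<bar>m (fst e) a - m (snd e) b\<bar>) =
     (\<lambda>e. (\<Sum>a<N (fst e). \<Sum>b<N (snd e).
             real_of_int \<bar>max (m (fst e) a) 0 - max (m (snd e) b) 0\<bar>)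
        + (\<Sum>a<N (fst e). \<Sum>b<N (snd e).
             real_of_int \<bar>min (m (fst e) a) 0 - min (m (snd e) b) 0\<bar>))"
    by (subst abs_diff_eq_pos_part_plus_neg_part) (simp only: of_int_add sum.distrib)
  show ?thesis
    unfolding monopole_dim_def flavours vectors bifundamentals sum_mset.distrib
    by (simp add: algebra_simps)
qed

lemma monopole_dim_zero_charge:
  assumes "\<forall>e\<in>#E. fst e < n \<and> snd e < n"
    and "\<not> charge_nonzero n N m"
  shows "monopole_dim n N F E m = 0"
proof -
  have zero: "m i a = 0" if "i < n" "a < N i" for i a
    using assms(2) that unfolding charge_nonzero_def by auto
  have "image_mset (\<lambda>e. \<Sum>a<N (fst e). \<Sum>b<N (snd e).
          real_of_int \<bar>m (fst e) a - m (snd e) b\<bar>) E = image_mset (\<lambda>e. 0) E"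
    by (rule image_mset_cong) (use assms(1) zero in auto)
  then show ?thesis
    unfolding monopole_dim_def using zero by simp
qed

lemma good_dim_one_sign_definite:
  assumes good: "\<forall>m. charge_nonzero n N m \<longrightarrow> monopole_dim n N F E m \<ge> 1"
    and dim_one: "monopole_dim n N F E m = 1"
  shows "(\<forall>i<n. \<forall>a<N i. m i a \<ge> 0) \<or> (\<forall>i<n. \<forall>a<N i. m i a \<le> 0)"
proof (rule ccontr)
  assume "\<not> ?thesis"
  then obtain i a j b where neg: "i < n" "a < N i" "m i a < 0"
    and pos: "j < n" "b < N j" "m j b > 0"
    by (meson not_le)
  have "charge_nonzero n N (\<lambda>i a. max (m i a) 0)"
    unfolding charge_nonzero_def using pos by force
  moreover have "charge_nonzero n N (\<lambda>i a. min (m i a) 0)"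
    unfolding charge_nonzero_def using neg by force
  ultimately have "monopole_dim n N F E (\<lambda>i a. max (m i a) 0) \<ge> 1"
    and "monopole_dim n N F E (\<lambda>i a. min (m i a) 0) \<ge> 1"
    using good by blast+
  with dim_one show False
    using monopole_dim_pos_neg_split[of n N F E m] by linarith
qed

lemma sum_eq_0_sign_definite:
  fixes f :: "'a \<Rightarrow> 'b::ordered_ab_group_add"
  assumes "finite A" and "(\<forall>a\<in>A. f a \<ge> 0) \<or> (\<forall>a\<in>A. f a \<le> 0)" and "sum f A = 0"
  shows "\<forall>a\<in>A. f a = 0"
  using assms(2)
proof
  assume "\<forall>a\<in>A. f a \<ge> 0"
  then show ?thesis
    using sum_nonneg_eq_0_iff[OF assms(1)] assms(3) by blast
next
  assume "\<forall>a\<in>A. f a \<le> 0"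
  moreover have "(\<Sum>a\<in>A. - f a) = 0"
    using assms(3) by (simp add: sum_negf)
  ultimately show ?thesis
    using sum_nonneg_eq_0_iff[OF assms(1), of "\<lambda>a. - f a"] by simp
qed

theorem mainTheorem3:
  fixes n :: nat and N F :: "nat \<Rightarrow> nat" and E :: "(nat \<times> nat) multiset"
  assumes ranks: "\<forall>i<n. N i \<ge> 2"
    and edges: "\<forall>e\<in>#E. fst e < n \<and> snd e < n \<and> fst e \<noteq> snd e"
    and good: "\<forall>m. charge_nonzero n N m \<longrightarrow> monopole_dim n N F E m \<ge> 1"
  shows "\<forall>m. monopole_dim n N F E m = 1 \<longrightarrow>
           (((\<forall>i<n. \<forall>a<N i. m i a \<ge> 0) \<or> (\<forall>i<n. \<forall>a<N i. m i a \<le> 0))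
            \<and> (\<exists>i<n. (\<Sum>a<N i. m i a) \<noteq> 0))"
proof (intro allI impI conjI)
  fix m
  assume dim_one: "monopole_dim n N F E m = 1"
  show sign: "(\<forall>i<n. \<forall>a<N i. m i a \<ge> 0) \<or> (\<forall>i<n. \<forall>a<N i. m i a \<le> 0)"
    using good_dim_one_sign_definite[OF good dim_one] .
  have "charge_nonzero n N m"
  proof (rule ccontr)
    assume "\<not> charge_nonzero n N m"
    moreover have "\<forall>e\<in>#E. fst e < n \<and> snd e < n"
      using edges by blast
    ultimately have "monopole_dim n N F E m = 0"
      by (simp add: monopole_dim_zero_charge)
    with dim_one show False
      by simp
  qed
  then obtain i a where "i < n" "a < N i" "m i a \<noteq> 0"
    unfolding charge_nonzero_def by blast
  moreover have "(\<forall>a\<in>{..<N i}. m i a \<ge> 0) \<or> (\<forall>a\<in>{..<N i}. m i a \<le> 0)"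
    using sign \<open>i < n\<close> by blast
  ultimately have "(\<Sum>a<N i. m i a) \<noteq> 0"
    using sum_eq_0_sign_definite[OF finite_lessThan] by blast
  with \<open>i < n\<close> show "\<exists>i<n. (\<Sum>a<N i. m i a) \<noteq> 0"
    by blast
qed

end
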